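(* Consider a matched pair study and assume Fisher's null $H_0$ holds. If $\Gamma^\star_{(k)}\le\Gamma_0$ for some $1\le k\le I$ and $\Gamma_0\in[1,\infty]$, then $\overline p_{\Gamma_0;k}:=\overline G_{\Gamma_0;k}(T)$, where $\overline G_{\Gamma_0;k}(c)=\mathbb P(\overline T(\Gamma_0;k)\ge c)$, satisfies $\mathbb P(\overline p_{\Gamma_0;k}\le\alpha)\le\alpha$ for all $\alpha\in(0,1)$.
   Context: Setting: $I$ matched pairs ($n_i=2$), potential outcomes fixed, $Z\in\mathcal Z=\{z\in\{0,1\}^{2I}:z_{i1}+z_{i2}=1\ \forall i\}$ is the only randomness, with true mechanism $\mathbb P(Z=z)=\prod_i\prod_j(p^\star_{ij})^{z_{ij}}$, $p^\star_{i1}+p^\star_{i2}=1$; true hidden bias $\Gamma^\star_i=\max_jp^\star_{ij}/\min_kp^\star_{ik}\in[1,\infty]$; $\Gamma^\star_{(k)}$ is the $k$th smallest. Fisher's null $H_0$: $Y_{ij}(1)=Y_{ij}(0)$ for all $i,j$. $T=\sum_i\sum_jZ_{ij}q_{ij}$ with $q_{ij}$ fixed functions of $Y(0)$. $\mathcal I_k$ is a set of indices of $k$ pairs with the smallest values of $|q_{i1}-q_{i2}|$. $\overline T(\Gamma_0;k)$ is a sum of independent variables: for $i\in\mathcal I_k$ it equals $\max\{q_{i1},q_{i2}\}$ with probability $\Gamma_0/(1+\Gamma_0)$ (probability 1 if $\Gamma_0=\infty$) and $\min\{q_{i1},q_{i2}\}$ otherwise; for $i\notin\mathcal I_k$ it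 equals $\max\{q_{i1},q_{i2}\}$ with probability 1. *)

theory Defs
  imports "HOL-Analysis.Analysis" "HOL-Probability.Probability" "HOL-Library.Extended_Real"
begin

text \<open>Pairs are indexed by i in {..<I}; unit 1 and unit 2 of pair i.
  An assignment z :: nat => bool encodes z i = True iff unit 1 of pair i is treated
  (so Z_{i1} = 1, Z_{i2} = 0), z i = False iff unit 2 is treated.
  p1 i is the true probability p*_{i1}; p*_{i2} = 1 - p1 i.\<close>

definition assign_pmf :: "nat \<Rightarrow> (nat \<Rightarrow> real) \<Rightarrow> (nat \<Rightarrow> bool) pmf" where
  "assign_pmf I p1 = Pi_pmf {..<I} False (\<lambda>i. bernoulli_pmf (p1 i))"

definition test_stat :: "nat \<Rightarrow> (nat \<Rightarrow> real) \<Rightarrow> (nat \<Rightarrow> real) \<Rightarrow> (nat \<Rightarrow> bool) \<Rightarrow> real" where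
  "test_stat I q1 q2 z = (\<Sum>i<I. if z i then q1 i else q2 i)"

definition hidden_bias :: "real \<Rightarrow> ereal" where
  "hidden_bias p = (if min p (1 - p) = 0 then PInfty
                    else ereal (max p (1 - p) / min p (1 - p)))"

definition kth_smallest :: "nat \<Rightarrow> (nat \<Rightarrow> 'a::linorder) \<Rightarrow> nat \<Rightarrow> 'a" where
  "kth_smallest I f k = sort (map f [0..<I]) ! (k - 1)"

definition gamma_prob :: "ereal \<Rightarrow> real" where
  "gamma_prob G = (if G = PInfty then 1 else real_of_ereal G / (1 + real_of_ereal G))"

definition Tbar_pmf :: "nat \<Rightarrow> (nat \<Rightarrow> real) \<Rightarrow> (nat \<Rightarrow> real) \<Rightarrow> nat set \<Rightarrow> ereal \<Rightarrow> real pmf" where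
  "Tbar_pmf I q1 q2 Ik G =
     map_pmf (\<lambda>b. \<Sum>i<I. if b i then max (q1 i) (q2 i) else min (q1 i) (q2 i))
       (Pi_pmf {..<I} False (\<lambda>i. bernoulli_pmf (if i \<in> Ik then gamma_prob G else 1)))"

definition Gbar :: "nat \<Rightarrow> (nat \<Rightarrow> real) \<Rightarrow> (nat \<Rightarrow> real) \<Rightarrow> nat set \<Rightarrow> ereal \<Rightarrow> real \<Rightarrow> real" where
  "Gbar I q1 q2 Ik G c = measure_pmf.prob (Tbar_pmf I q1 q2 Ik G) {t. t \<ge> c}"

end

theory Submission
  imports Defs
begin

text \<open>Choose k pairs J whose hidden bias is at most \<Gamma>0. Coordinatewise, the indicator that pair j
  receives its larger q-value can be topped up to a Bernoulli(\<Gamma>0/(1+\<Gamma>0)) variable for j in J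
  and to the constant True elsewhere; this couples T with a variable that has the law of
  Tbar(\<Gamma>0;k) except that the random pairs are J instead of Ik, and that variable is pointwise
  at least T. Moving the random pairs from J to Ik by an involution can only make the sum
  larger, because the pairs in Ik have the smallest gaps |q_i1 - q_i2|. Hence the upper
  tail of T is dominated by Gbar, and a p-value computed from a dominating upper tail is valid.\<close>

lemma prob_survival_pvalue_le:
  fixes A :: "'a pmf" and T :: "'a \<Rightarrow> real"
  assumes fin: "finite (set_pmf A)" and "0 \<le> \<alpha>"
    and dominated: "\<And>x. measure_pmf.prob A {y. x \<le> T y} \<le> G x"
  shows "measure_pmf.prob A {z. G (T z) \<le> \<alpha>} \<le> \<alpha>"
proof -
  define S where "S = {z. G (T z) \<le> \<alpha>} \<inter> set_pmf A"
  have prob_S: "measure_pmf.prob A {z. G (T z) \<le> \<alpha>} = measure_pmf.prob A S"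
    by (simp add: S_def measure_Int_set_pmf)
  show ?thesis
  proof (cases "S = {}")
    case True
    then show ?thesis using prob_S \<open>0 \<le> \<alpha>\<close> by simp
  next
    case False
    have "finite S" using fin by (simp add: S_def)
    define z0 where "z0 = arg_min_on T S"
    have z0: "z0 \<in> S" "\<And>z. z \<in> S \<Longrightarrow> T z0 \<le> T z"
      using \<open>finite S\<close> False by (simp_all add: z0_def arg_min_if_finite(1) arg_min_least)
    have "measure_pmf.prob A S \<le> measure_pmf.prob A {y. T z0 \<le> T y}"
      by (rule measure_pmf.finite_measure_mono) (use z0(2) in blast, simp)
    also have "\<dots> \<le> G (T z0)" by (rule dominated)
    also have "\<dots> \<le> \<alpha>" using z0(1) by (simp add: S_def)
    finally show ?thesis using prob_S by simp
  qed
qed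

lemma prob_survival_le_bind_pmf:
  fixes T :: "'a \<Rightarrow> real" and S :: "'b \<Rightarrow> real"
  assumes "\<And>z b. z \<in> set_pmf A \<Longrightarrow> b \<in> set_pmf (K z) \<Longrightarrow> T z \<le> S b"
  shows "measure_pmf.prob A {z. x \<le> T z} \<le> measure_pmf.prob (bind_pmf A K) {b. x \<le> S b}"
proof -
  define W where "W = bind_pmf A (\<lambda>z. map_pmf (Pair z) (K z))"
  have fst_W: "map_pmf fst W = A"
    unfolding W_def map_bind_pmf by (simp add: map_pmf_comp comp_def bind_return_pmf')
  have snd_W: "map_pmf snd W = bind_pmf A K"
    unfolding W_def map_bind_pmf by (simp add: map_pmf_comp comp_def)
  have "measure_pmf.prob A {z. x \<le> T z} = measure_pmf.prob W {w. x \<le> T (fst w)}"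
    by (subst fst_W[symmetric]) (simp add: vimage_def)
  also have "\<dots> \<le> measure_pmf.prob W {w. x \<le> S (snd w)}"
    by (rule measure_pmf.finite_measure_mono_AE)
       (auto simp: AE_measure_pmf_iff W_def dest!: assms)
  also have "\<dots> = measure_pmf.prob (bind_pmf A K) {b. x \<le> S b}"
    by (subst snd_W[symmetric]) (simp add: vimage_def)
  finally show ?thesis .
qed

lemma Pi_pmf_reindex_involution:
  assumes "finite A" and h_A: "\<And>x. x \<in> A \<Longrightarrow> h x \<in> A" and h_h: "\<And>x. h (h x) = x"
    and h_outside: "\<And>x. x \<notin> A \<Longrightarrow> h x = x"
  shows "Pi_pmf A d (\<lambda>j. p (h j)) = map_pmf (\<lambda>g. g \<circ> h) (Pi_pmf A d p)"
proof (rule pmf_eqI)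
  fix f :: "'a \<Rightarrow> 'b"
  have "inj (\<lambda>g::'a \<Rightarrow> 'b. g \<circ> h)"
    by (rule inj_on_inverseI[where g = "\<lambda>g. g \<circ> h"]) (simp add: fun_eq_iff h_h)
  then have "pmf (map_pmf (\<lambda>g. g \<circ> h) (Pi_pmf A d p)) ((f \<circ> h) \<circ> h) = pmf (Pi_pmf A d p) (f \<circ> h)"
    by (rule pmf_map_inj')
  then have pmf_map: "pmf (map_pmf (\<lambda>g. g \<circ> h) (Pi_pmf A d p)) f = pmf (Pi_pmf A d p) (f \<circ> h)"
    by (simp add: comp_def h_h)
  have "(\<Prod>x\<in>A. pmf (p x) (f (h x))) = (\<Prod>j\<in>A. pmf (p (h j)) (f j))"
    by (rule prod.reindex_bij_witness[where i = h and j = h]) (auto simp: h_h h_A)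
  then show "pmf (Pi_pmf A d (\<lambda>j. p (h j))) f = pmf (map_pmf (\<lambda>g. g \<circ> h) (Pi_pmf A d p)) f"
    unfolding pmf_map using \<open>finite A\<close> h_outside by (auto simp: pmf_Pi)
qed

lemma bernoulli_pmf_1: "bernoulli_pmf 1 = return_pmf True"
  by (rule pmf_eqI) (auto simp: indicator_def)

lemma bind_bernoulli_top_up:
  fixes p \<gamma> :: real and c :: bool
  defines "\<pi> \<equiv> if c then p else 1 - p"
  assumes "0 \<le> p" "p \<le> 1" "\<pi> \<le> \<gamma>" "\<gamma> \<le> 1"
  shows "bind_pmf (bernoulli_pmf p)
           (\<lambda>a. if a = c then return_pmf True else bernoulli_pmf ((\<gamma> - \<pi>) / (1 - \<pi>)))
         = bernoulli_pmf \<gamma>"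
proof -
  define s where "s = (\<gamma> - \<pi>) / (1 - \<pi>)"
  have \<pi>: "0 \<le> \<pi>" "\<pi> \<le> 1" using assms by (auto simp: \<pi>_def)
  have s: "0 \<le> s" "s \<le> 1"
    using assms \<pi> by (auto simp: s_def divide_le_eq)
  have total: "\<pi> + (1 - \<pi>) * s = \<gamma>"
    using assms by (cases "\<pi> = 1") (auto simp: s_def)
  have "pmf (bind_pmf (bernoulli_pmf p) (\<lambda>a. if a = c then return_pmf True else bernoulli_pmf s)) x
        = pmf (bernoulli_pmf \<gamma>) x" for x
    unfolding pmf_bind using assms s total \<pi>
    by (cases c; cases x) (auto simp: \<pi>_def algebra_simps)
  then show ?thesis unfolding s_def by (rule pmf_eqI)
qed

lemma obtain_involution_swapping:
  assumes "finite J" "finite K" "card J = card K"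
  obtains h where "\<And>x. h (h x) = x" "\<And>x. x \<notin> J \<union> K \<Longrightarrow> h x = x"
    "\<And>x. x \<in> J \<inter> K \<Longrightarrow> h x = x" "\<And>x. h x \<in> K \<longleftrightarrow> x \<in> J"
proof -
  have "card (J - K) = card (K - J)"
    using assms by (simp add: card_Diff_subset_Int Int_commute)
  then obtain g where g: "bij_betw g (J - K) (K - J)"
    using finite_same_card_bij[of "J - K" "K - J"] assms by auto
  define g' where "g' = inv_into (J - K) g"
  have g': "bij_betw g' (K - J) (J - K)"
    unfolding g'_def by (rule bij_betw_inv_into[OF g])
  have g'_g: "g' (g x) = x" if "x \<in> J - K" for x
    using g that by (simp add: g'_def bij_betw_def)
  have g_g': "g (g' x) = x" if "x \<in> K - J" for x
    using g that unfolding g'_def bij_betw_def by (simp add: f_inv_into_f)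
  have g_maps: "g x \<in> K - J" if "x \<in> J - K" for x
    using bij_betwE[OF g] that by blast
  have g'_maps: "g' x \<in> J - K" if "x \<in> K - J" for x
    using bij_betwE[OF g'] that by blast
  define h where "h x = (if x \<in> J - K then g x else if x \<in> K - J then g' x else x)" for x
  have h_JK: "h x = g x" if "x \<in> J - K" for x
    using that by (simp add: h_def del: Diff_iff)
  have h_KJ: "h x = g' x" if "x \<in> K - J" for x
    using that by (auto simp: h_def)
  have h_id: "h x = x" if "x \<notin> J - K" "x \<notin> K - J" for x
    using that by (simp add: h_def del: Diff_iff)
  show ?thesis
  proof
    fix x
    consider "x \<in> J - K" | "x \<in> K - J" | "x \<notin> J - K" "x \<notin> K - J" by blast
    then have "h (h x) = x \<and> (h x \<in> K \<longleftrightarrow> x \<in> J)"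
    proof cases
      case 1
      with g_maps[OF 1] show ?thesis by (simp add: h_JK h_KJ g'_g)
    next
      case 2
      with g'_maps[OF 2] show ?thesis by (simp add: h_JK h_KJ g_g')
    next
      case 3
      then show ?thesis by (auto simp: h_id)
    qed
    then show "h (h x) = x" "h x \<in> K \<longleftrightarrow> x \<in> J" by simp_all
  qed (use h_id in auto)
qed

lemma gamma_prob_le_1:
  assumes "1 \<le> G"
  shows "gamma_prob G \<le> 1"
  using assms by (cases G) (simp_all add: gamma_prob_def)

lemma max_le_gamma_prob_if_hidden_bias_le:
  fixes p :: real
  assumes p: "0 \<le> p" "p \<le> 1" and "1 \<le> G" and bias: "hidden_bias p \<le> G"
  shows "max p (1 - p) \<le> gamma_prob G"
proof (cases G)
  case (real g)
  have "min p (1 - p) \<noteq> 0" using bias real by (auto simp: hidden_bias_def)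
  then have min_pos: "min p (1 - p) > 0" using p by linarith
  have "max p (1 - p) / min p (1 - p) \<le> g" using bias real min_pos by (simp add: hidden_bias_def)
  then have "max p (1 - p) \<le> g * (1 - max p (1 - p))"
    using min_pos by (simp add: divide_le_eq min_def max_def split: if_splits)
  then have "max p (1 - p) * (1 + g) \<le> g" by (simp add: algebra_simps)
  moreover have "1 \<le> g" using \<open>1 \<le> G\<close> real by simp
  ultimately show ?thesis using real by (simp add: gamma_prob_def le_divide_eq)
qed (use p \<open>1 \<le> G\<close> in \<open>auto simp: gamma_prob_def\<close>)

lemma card_le_if_kth_smallest_le:
  fixes f :: "nat \<Rightarrow> 'a::linorder"
  assumes k: "1 \<le> k" "k \<le> I" and le: "kth_smallest I f k \<le> G"
  shows "k \<le> card {i. i < I \<and> f i \<le> G}"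
proof -
  define xs where "xs = map f [0..<I]"
  define ys where "ys = sort xs"
  have len: "length ys = I" by (simp add: ys_def xs_def)
  have take_le: "y \<le> G" if "y \<in> set (take k ys)" for y
  proof -
    obtain n where n: "n < k" "y = ys ! n"
      using \<open>y \<in> set (take k ys)\<close> k len by (auto simp: in_set_conv_nth)
    have "ys ! n \<le> ys ! (k - 1)" using n k len by (intro sorted_nth_mono) (auto simp: ys_def)
    also have "\<dots> \<le> G" using le by (simp add: kth_smallest_def ys_def xs_def)
    finally show ?thesis using n by simp
  qed
  have "k = length (filter (\<lambda>y. y \<le> G) (take k ys))"
    using take_le k len by (simp add: filter_True min_def)
  also have "\<dots> \<le> length (filter (\<lambda>y. y \<le> G) ys)"
    by (metis append_take_drop_id filter_append length_append le_add1)
  also have "\<dots> = length (filter (\<lambda>y. y \<le> G) xs)"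
    unfolding ys_def by (metis mset_filter mset_sort size_mset)
  also have "\<dots> = card {i. i < I \<and> f i \<le> G}"
    unfolding xs_def length_filter_conv_card by (intro arg_cong[of _ _ card]) auto
  finally show ?thesis .
qed

definition bernoulli_on :: "nat \<Rightarrow> nat set \<Rightarrow> real \<Rightarrow> (nat \<Rightarrow> bool) pmf" where
  "bernoulli_on I S \<gamma> = Pi_pmf {..<I} False (\<lambda>i. bernoulli_pmf (if i \<in> S then \<gamma> else 1))"

definition upper_sum :: "nat \<Rightarrow> (nat \<Rightarrow> real) \<Rightarrow> (nat \<Rightarrow> real) \<Rightarrow> (nat \<Rightarrow> bool) \<Rightarrow> real" where
  "upper_sum I q1 q2 b = (\<Sum>i<I. if b i then max (q1 i) (q2 i) else min (q1 i) (q2 i))"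

lemma Gbar_eq_prob_upper_sum:
  "Gbar I q1 q2 Ik G c
     = measure_pmf.prob (bernoulli_on I Ik (gamma_prob G)) {b. c \<le> upper_sum I q1 q2 b}"
  by (simp add: Gbar_def Tbar_pmf_def bernoulli_on_def upper_sum_def)

lemma set_pmf_bernoulli_on_outside:
  assumes "b \<in> set_pmf (bernoulli_on I S \<gamma>)" "i < I" "i \<notin> S"
  shows "b i"
  using assms by (auto simp: bernoulli_on_def set_Pi_pmf PiE_dflt_def bernoulli_pmf_1)

lemma finite_set_pmf_assign_pmf: "finite (set_pmf (assign_pmf I p1))"
  unfolding assign_pmf_def by (subst set_Pi_pmf) auto

lemma bernoulli_on_comp_involution:
  assumes "\<And>x. h (h x) = x" "\<And>x. x < I \<Longrightarrow> h x < I" "\<And>x. x \<notin> {..<I} \<Longrightarrow> h x = x"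
    and "\<And>x. h x \<in> J \<longleftrightarrow> x \<in> K"
  shows "bernoulli_on I K \<gamma> = map_pmf (\<lambda>b. b \<circ> h) (bernoulli_on I J \<gamma>)"
  unfolding bernoulli_on_def assms(4)[symmetric]
  by (rule Pi_pmf_reindex_involution) (use assms(1-3) in auto)

lemma test_stat_le_upper_sum:
  assumes "\<And>i. i < I \<Longrightarrow> \<not> b i \<Longrightarrow> (if z i then q1 i else q2 i) = min (q1 i) (q2 i)"
  shows "test_stat I q1 q2 z \<le> upper_sum I q1 q2 b"
  unfolding test_stat_def upper_sum_def by (rule sum_mono) (use assms in auto)

text \<open>Writing each summand as max minus the gap |q1 - q2| when b is False, composing b with
  an involution only permutes which gaps are subtracted.\<close>

lemma upper_sum_le_comp_involution:
  assumes h_h: "\<And>x. h (h x) = x" and h_I: "\<And>x. x < I \<Longrightarrow> h x < I"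
    and gap: "\<And>j. j < I \<Longrightarrow> \<not> b j \<Longrightarrow> \<bar>q1 (h j) - q2 (h j)\<bar> \<le> \<bar>q1 j - q2 j\<bar>"
  shows "upper_sum I q1 q2 b \<le> upper_sum I q1 q2 (b \<circ> h)"
proof -
  define M where "M i = max (q1 i) (q2 i)" for i
  define d where "d i = \<bar>q1 i - q2 i\<bar>" for i
  have upper_sum_eq: "upper_sum I q1 q2 b' = (\<Sum>i<I. M i) - (\<Sum>i<I. if b' i then 0 else d i)" for b'
    unfolding upper_sum_def sum_subtractf[symmetric] by (rule sum.cong) (auto simp: M_def d_def)
  have "(\<Sum>i<I. if b (h i) then 0 else d i) = (\<Sum>j<I. if b j then 0 else d (h j))"
    by (rule sum.reindex_bij_witness[where i = h and j = h]) (auto simp: h_h h_I)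
  also have "\<dots> \<le> (\<Sum>j<I. if b j then 0 else d j)"
    by (rule sum_mono) (auto simp: d_def gap)
  finally show ?thesis unfolding upper_sum_eq by simp
qed

lemma prob_test_stat_le_bernoulli_on:
  fixes p1 q1 q2 :: "nat \<Rightarrow> real" and J :: "nat set" and \<gamma> x :: real
  assumes prob: "\<And>i. i < I \<Longrightarrow> 0 \<le> p1 i \<and> p1 i \<le> 1"
    and low_bias: "\<And>j. j \<in> J \<Longrightarrow> max (p1 j) (1 - p1 j) \<le> \<gamma>" and "\<gamma> \<le> 1"
  shows "measure_pmf.prob (assign_pmf I p1) {z. x \<le> test_stat I q1 q2 z}
         \<le> measure_pmf.prob (bernoulli_on I J \<gamma>) {b. x \<le> upper_sum I q1 q2 b}"
proof -
  define c where "c j = (q2 j \<le> q1 j)" for j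
  define \<pi> where "\<pi> j = (if c j then p1 j else 1 - p1 j)" for j
  define Q where "Q j a = (if j \<in> J \<and> a \<noteq> c j then bernoulli_pmf ((\<gamma> - \<pi> j) / (1 - \<pi> j))
                          else return_pmf True)" for j a
  define K where "K z = Pi_pmf {..<I} False (\<lambda>j. Q j (z j))" for z
  \<comment> \<open>Under K z, b j can be False only when z gives pair j its smaller q-value.\<close>
  have "bind_pmf (assign_pmf I p1) K = Pi_pmf {..<I} False (\<lambda>j. bind_pmf (bernoulli_pmf (p1 j)) (Q j))"
    unfolding K_def assign_pmf_def by (subst Pi_pmf_bind[where d' = False]) auto
  also have "\<dots> = bernoulli_on I J \<gamma>"
    unfolding bernoulli_on_def
  proof (rule Pi_pmf_cong)
    fix j assume "j \<in> {..<I}"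
    show "bind_pmf (bernoulli_pmf (p1 j)) (Q j) = bernoulli_pmf (if j \<in> J then \<gamma> else 1)"
    proof (cases "j \<in> J")
      case True
      have "\<pi> j \<le> \<gamma>" using low_bias[OF True] by (auto simp: \<pi>_def)
      moreover have "Q j = (\<lambda>a. if a = c j then return_pmf True
                                 else bernoulli_pmf ((\<gamma> - \<pi> j) / (1 - \<pi> j)))"
        using True by (auto simp: Q_def fun_eq_iff)
      ultimately show ?thesis
        using True prob \<open>j \<in> {..<I}\<close> \<open>\<gamma> \<le> 1\<close> unfolding \<pi>_def
        by (simp add: bind_bernoulli_top_up)
    next
      case False
      then have "Q j = (\<lambda>a. return_pmf True)" by (simp add: Q_def fun_eq_iff)
      with False show ?thesis by (simp add: bernoulli_pmf_1 bind_pmf_const)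
    qed
  qed simp_all
  finally have bind_eq: "bind_pmf (assign_pmf I p1) K = bernoulli_on I J \<gamma>" .
  have "test_stat I q1 q2 z \<le> upper_sum I q1 q2 b" if b: "b \<in> set_pmf (K z)" for z b
  proof (rule test_stat_le_upper_sum)
    fix i assume "i < I" "\<not> b i"
    have "b i \<in> set_pmf (Q i (z i))"
      using b \<open>i < I\<close> by (auto simp: K_def set_Pi_pmf PiE_dflt_def)
    with \<open>\<not> b i\<close> have "z i \<noteq> c i" by (auto simp: Q_def split: if_splits)
    then show "(if z i then q1 i else q2 i) = min (q1 i) (q2 i)" by (auto simp: c_def)
  qed
  then show ?thesis
    unfolding bind_eq[symmetric] by (intro prob_survival_le_bind_pmf)
qed

lemma prob_upper_sum_bernoulli_on_le_smallest_gaps: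
  assumes J: "J \<subseteq> {..<I}" and K: "K \<subseteq> {..<I}" and "card J = card K"
    and smallest: "\<And>i j. i \<in> K \<Longrightarrow> j \<in> {..<I} - K \<Longrightarrow> \<bar>q1 i - q2 i\<bar> \<le> \<bar>q1 j - q2 j\<bar>"
  shows "measure_pmf.prob (bernoulli_on I J \<gamma>) {b. x \<le> upper_sum I q1 q2 b}
         \<le> measure_pmf.prob (bernoulli_on I K \<gamma>) {b. x \<le> upper_sum I q1 q2 b}"
proof -
  have "finite J" "finite K" using finite_subset[OF J] finite_subset[OF K] by simp_all
  then obtain h where h_h: "\<And>x. h (h x) = x" and h_out: "\<And>x. x \<notin> J \<union> K \<Longrightarrow> h x = x"
    and h_fix: "\<And>x. x \<in> J \<inter> K \<Longrightarrow> h x = x" and h_K: "\<And>x. h x \<in> K \<longleftrightarrow> x \<in> J"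
    using obtain_involution_swapping \<open>card J = card K\<close> by blast
  have h_J: "h x \<in> J \<longleftrightarrow> x \<in> K" for x
    using h_K[of "h x"] by (simp add: h_h)
  have h_I: "h x < I" if "x < I" for x
    using that J K h_K[of x] h_J[of x] h_out[of x] by (cases "x \<in> J \<union> K") auto
  have gap: "\<bar>q1 (h j) - q2 (h j)\<bar> \<le> \<bar>q1 j - q2 j\<bar>" if "j \<in> J" for j
  proof (cases "j \<in> K")
    case True
    then show ?thesis using h_fix that by simp
  next
    case False
    then show ?thesis using smallest h_K that J by blast
  qed
  have "h x = x" if "x \<notin> {..<I}" for x
    using that J K by (intro h_out) blast
  then have law: "bernoulli_on I K \<gamma> = map_pmf (\<lambda>b. b \<circ> h) (bernoulli_on I J \<gamma>)"
    using h_h h_I h_J by (intro bernoulli_on_comp_involution) auto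
  have "measure_pmf.prob (bernoulli_on I J \<gamma>) {b. x \<le> upper_sum I q1 q2 b}
        \<le> measure_pmf.prob (bernoulli_on I J \<gamma>) {b. x \<le> upper_sum I q1 q2 (b \<circ> h)}"
  proof (rule measure_pmf.finite_measure_mono_AE)
    have "x \<le> upper_sum I q1 q2 (b \<circ> h)"
      if "b \<in> set_pmf (bernoulli_on I J \<gamma>)" "x \<le> upper_sum I q1 q2 b" for b
    proof -
      have "upper_sum I q1 q2 b \<le> upper_sum I q1 q2 (b \<circ> h)"
        using h_h h_I gap set_pmf_bernoulli_on_outside[OF that(1)]
        by (blast intro: upper_sum_le_comp_involution)
      then show ?thesis using that(2) by linarith
    qed
    then show "AE b in bernoulli_on I J \<gamma>.
                 b \<in> {b. x \<le> upper_sum I q1 q2 b} \<longrightarrow> b \<in> {b. x \<le> upper_sum I q1 q2 (b \<circ> h)}"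
      by (auto simp: AE_measure_pmf_iff)
  qed simp
  also have "\<dots> = measure_pmf.prob (bernoulli_on I K \<gamma>) {b. x \<le> upper_sum I q1 q2 b}"
    by (simp add: law vimage_def)
  finally show ?thesis .
qed

theorem corollary2:
  fixes I k :: nat and p1 q1 q2 :: "nat \<Rightarrow> real" and Ik :: "nat set"
    and \<Gamma>0 :: ereal and \<alpha> :: real
  assumes prob: "\<And>i. i < I \<Longrightarrow> 0 \<le> p1 i \<and> p1 i \<le> 1"
    and k: "1 \<le> k" "k \<le> I"
    and Ik_sub: "Ik \<subseteq> {..<I}" and Ik_card: "card Ik = k"
    and Ik_smallest: "\<And>i j. i \<in> Ik \<Longrightarrow> j \<in> {..<I} - Ik \<Longrightarrow>
                          \<bar>q1 i - q2 i\<bar> \<le> \<bar>q1 j - q2 j\<bar>"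
    and G0: "1 \<le> \<Gamma>0"
    and bias: "kth_smallest I (\<lambda>i. hidden_bias (p1 i)) k \<le> \<Gamma>0"
    and alpha: "0 < \<alpha>" "\<alpha> < 1"
  shows "measure_pmf.prob (assign_pmf I p1)
           {z. Gbar I q1 q2 Ik \<Gamma>0 (test_stat I q1 q2 z) \<le> \<alpha>} \<le> \<alpha>"
proof -
  define \<gamma> where "\<gamma> = gamma_prob \<Gamma>0"
  have "k \<le> card {i. i < I \<and> hidden_bias (p1 i) \<le> \<Gamma>0}"
    by (rule card_le_if_kth_smallest_le[OF k bias])
  then obtain J where J: "J \<subseteq> {i. i < I \<and> hidden_bias (p1 i) \<le> \<Gamma>0}" "card J = k"
    by (meson obtain_subset_with_card_n)
  have low_bias: "max (p1 j) (1 - p1 j) \<le> \<gamma>" if "j \<in> J" for j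
  proof -
    have "j < I" "hidden_bias (p1 j) \<le> \<Gamma>0" using J(1) that by auto
    then show ?thesis
      unfolding \<gamma>_def using prob G0 by (intro max_le_gamma_prob_if_hidden_bias_le) auto
  qed
  have dominated: "measure_pmf.prob (assign_pmf I p1) {z. x \<le> test_stat I q1 q2 z}
                   \<le> Gbar I q1 q2 Ik \<Gamma>0 x" for x
  proof -
    have "measure_pmf.prob (assign_pmf I p1) {z. x \<le> test_stat I q1 q2 z}
          \<le> measure_pmf.prob (bernoulli_on I J \<gamma>) {b. x \<le> upper_sum I q1 q2 b}"
      using prob low_bias gamma_prob_le_1[OF G0] unfolding \<gamma>_def
      by (rule prob_test_stat_le_bernoulli_on)
    also have "\<dots> \<le> measure_pmf.prob (bernoulli_on I Ik \<gamma>) {b. x \<le> upper_sum I q1 q2 b}"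
      using J Ik_sub Ik_card Ik_smallest
      by (intro prob_upper_sum_bernoulli_on_le_smallest_gaps) auto
    also have "\<dots> = Gbar I q1 q2 Ik \<Gamma>0 x"
      by (simp add: Gbar_eq_prob_upper_sum \<gamma>_def)
    finally show ?thesis .
  qed
  show ?thesis
    using finite_set_pmf_assign_pmf \<open>0 < \<alpha>\<close> dominated
    by (intro prob_survival_pvalue_le) auto
qed

end
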